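(* For all integers $k\ge 2$, all $l\in\{1,\dots,k-1\}$ and all $t\ge 0$, $$\Big\|\big(L_l\circ\cdots\circ L_{k-1}\big)(\phi_k(t))\Big\|_2\ \ge\ \big(L_l\circ\cdots\circ L_{k-1}\big)_d(\phi_k(t))\ \ge\ E^l(t),$$ where the subscript $d$ denotes the $d$-th coordinate. The same two inequalities hold with $\phi_k(t)$ replaced by $(0,\dots,0,E^k(t)+M)$.
   Context: Let $d\ge 3$, $Q=[-1,1]^{d-1}$, $\mathbb S_+=\{x\in\mathbb R^d:\|x\|_2=1,\ x_d\ge 0\}$, $\mathbb H_{\ge c}=\{x\in\mathbb R^d:x_d\ge c\}$. Let $h\colon Q\to\mathbb S_+$ be a bi-Lipschitz homeomorphism, $F(x)=e^{x_d}h(x_1,\dots,x_{d-1})$ on $Q\times\mathbb R$, extended to $\mathbb R^d$ by reflection (domain reflected in the hyperplanes $x_j=2n+1$, image reflected in $x_d=0$). Operator norm $\|A\|=\sup_{\|v\|_2=1}\|Av\|_2$, $l(A)=\inf_{\|v\|_2=1}\|Av\|_2$. Fix $\alpha\in(0,1)$, $m<M$, $M\ge1$ with $\|DF(x)\|\le\alpha$ a.e. for $x_d\le m$ and $l(DF(x))\ge1/\alpha$ a.e. for $x_d\ge M$. Fix $a\ge e^M-m$, $f(x)=F(x)-(0,\dots,0,a)$. For $r\in\mathbb Z^{d-1}$, $P(r)=\{x\in\mathbb R^{d-1}:|x_j-2r_j|<1\ \forall j\}$, $S=\{r\in\mathbb Z^{d-1}:\sum_jr_j\text{ even}\}$. For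 $r\in S$, $f$ maps $P(r)\times\mathbb R$ bijectively onto $\mathbb H_{>-a}$ and $f(P(r)\times(M,\infty))\supset\mathbb H_{\ge M}$; let $\Lambda^r\colon\mathbb H_{\ge M}\to P(r)\times(M,\infty)$ be the corresponding branch of $f^{-1}$. Let $E(t)=e^t-1$ on $[0,\infty)$ with iterates $E^k$. Fix a sequence $\underline s=(s_k)_{k\ge0}$ with $s_k\in S$, write $L_k=\Lambda^{s_k}$, and $\phi_k(t)=L_k(0,\dots,0,E^{k+1}(t)+M)$ for $t\ge0$. *)

theory Defs
  imports "HOL-Analysis.Analysis"
begin

text \<open>Points of R^d are represented as pairs (y, x_d) with y in R^(d-1) = real^'m;
  the product norm is the Euclidean 2-norm; the d-th coordinate is snd.\<close>

definition cubeQ :: "(real^'m) set" where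
  "cubeQ = {y. \<forall>j. \<bar>y$j\<bar> \<le> 1}"

definition hemisphere :: "((real^'m) \<times> real) set" where
  "hemisphere = {z. norm z = 1 \<and> snd z \<ge> 0}"

definition bi_lipschitz_on :: "'a::metric_space set \<Rightarrow> ('a \<Rightarrow> 'b::metric_space) \<Rightarrow> bool" where
  "bi_lipschitz_on S h \<longleftrightarrow> (\<exists>C>0. \<forall>x\<in>S. \<forall>y\<in>S.
      dist (h x) (h y) \<le> C * dist x y \<and> dist x y \<le> C * dist (h x) (h y))"

text \<open>Index n of the interval [2n-1, 2n+1] containing s (number of reflections, signed).\<close>
definition refl_idx :: "real \<Rightarrow> int" where
  "refl_idx s = \<lfloor>(s + 1) / 2\<rfloor>"

text \<open>Triangle wave: folding of R onto [-1,1] by reflections in the points 2n+1.\<close>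
definition tri_fold :: "real \<Rightarrow> real" where
  "tri_fold s = (-1) ^ nat \<bar>refl_idx s\<bar> * (s - 2 * of_int (refl_idx s))"

definition fold_cube :: "real^'m \<Rightarrow> real^'m" where
  "fold_cube y = (\<chi> j. tri_fold (y$j))"

definition refl_count :: "real^'m \<Rightarrow> int" where
  "refl_count y = (\<Sum>j\<in>UNIV. refl_idx (y$j))"

definition flip_d :: "(real^'m) \<times> real \<Rightarrow> (real^'m) \<times> real" where
  "flip_d z = (fst z, - snd z)"

text \<open>F(x) = e^{x_d} h(x') on Q x R, extended by reflection: each reflection of the
  domain in a hyperplane x_j = 2n+1 corresponds to a reflection of the image in x_d = 0.\<close>
definition reflF :: "(real^'m \<Rightarrow> (real^'m) \<times> real) \<Rightarrow> (real^'m) \<times> real \<Rightarrow> (real^'m) \<times> real" where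
  "reflF h x = (if even (refl_count (fst x)) then id else flip_d)
                 (exp (snd x) *\<^sub>R h (fold_cube (fst x)))"

definition Pcell :: "int^'m \<Rightarrow> (real^'m) set" where
  "Pcell r = {y. \<forall>j. \<bar>y$j - 2 * of_int (r$j)\<bar> < 1}"

definition evenS :: "(int^'m) set" where
  "evenS = {r. even (\<Sum>j\<in>UNIV. r$j)}"

definition lower_norm :: "('a::real_normed_vector \<Rightarrow> 'b::real_normed_vector) \<Rightarrow> real" where
  "lower_norm A = (INF v\<in>{v. norm v = 1}. norm (A v))"

definition Eexp :: "real \<Rightarrow> real" where
  "Eexp t = exp t - 1"

definition branch :: "((real^'m) \<times> real \<Rightarrow> (real^'m) \<times> real) \<Rightarrow> int^'m \<Rightarrow> (real^'m) \<times> real \<Rightarrow> (real^'m) \<times> real" where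
  "branch f r = the_inv_into (Pcell r \<times> UNIV) f"

definition chain :: "(nat \<Rightarrow> 'a \<Rightarrow> 'a) \<Rightarrow> nat \<Rightarrow> nat \<Rightarrow> 'a \<Rightarrow> 'a" where
  "chain L l k = foldr (\<circ>) (map L [l..<k]) id"

end

theory Submission
  imports Defs "HOL-Analysis.Analysis"
begin

(* On an even cell P(r) the map F is x \<mapsto> e^{x_d} h(fold x'), and folding is a bijection of P(r)
   onto the open cube. Since h is a homeomorphism of the cube onto the closed hemisphere, invariance
   of domain forces h^{-1} to send the open upper hemisphere into the open cube; hence F is injective
   on P(r) \<times> \<real> with image containing the open upper half-space, and \<Lambda>^r is a genuine inverse of f on
   H_{>-a}. For x = \<Lambda>^r(y) this gives e^{x_d} = |y + a e_d| \<ge> y_d + a, and since a > e^M - M every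
   branch maps {y_d \<ge> M, y_d \<ge> E(c)} into {x_d \<ge> M, x_d \<ge> c}; iterating along the chain yields E^l(t). *)

lemma refl_idx_eq: "\<bar>y - 2 * of_int n\<bar> < 1 \<Longrightarrow> refl_idx y = n"
  unfolding refl_idx_def by (intro floor_unique) (auto simp: abs_less_iff)

lemma tri_fold_eq: "\<bar>y - 2 * of_int n\<bar> < 1 \<Longrightarrow> tri_fold y = (-1) ^ nat \<bar>n\<bar> * (y - 2 * of_int n)"
  unfolding tri_fold_def by (simp add: refl_idx_eq)

lemma bij_betw_tri_fold: "bij_betw tri_fold {y. \<bar>y - 2 * of_int n\<bar> < 1} {-1<..<1}"
proof (rule bij_betw_byWitness)
  let ?unfold = "\<lambda>u. 2 * of_int n + (-1) ^ nat \<bar>n\<bar> * u :: real"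
  have sign_sq: "((-1::real) ^ nat \<bar>n\<bar>) * (-1) ^ nat \<bar>n\<bar> = 1"
    by (simp flip: power_add)
  have unfold_cell: "\<bar>?unfold u - 2 * of_int n\<bar> < 1" if "u \<in> {-1<..<1}" for u
    using that by (simp add: abs_mult abs_less_iff)
  show "\<forall>y\<in>{y. \<bar>y - 2 * of_int n\<bar> < 1}. ?unfold (tri_fold y) = y"
    using sign_sq by (auto simp: tri_fold_eq algebra_simps)
  show "\<forall>u\<in>{-1<..<1}. tri_fold (?unfold u) = u"
  proof
    fix u :: real assume "u \<in> {-1<..<1}"
    then have "tri_fold (?unfold u) = ((-1) ^ nat \<bar>n\<bar> * (-1) ^ nat \<bar>n\<bar>) * u"
      using tri_fold_eq[OF unfold_cell] by simp
    then show "tri_fold (?unfold u) = u"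
      using sign_sq by simp
  qed
  show "tri_fold ` {y. \<bar>y - 2 * of_int n\<bar> < 1} \<subseteq> {-1<..<1}"
  proof clarify
    fix y :: real assume "\<bar>y - 2 * of_int n\<bar> < 1"
    then have "\<bar>tri_fold y\<bar> < 1" by (simp add: tri_fold_eq abs_mult)
    then show "tri_fold y \<in> {-1<..<1}" by (simp add: abs_less_iff)
  qed
  show "?unfold ` {-1<..<1} \<subseteq> {y. \<bar>y - 2 * of_int n\<bar> < 1}"
    using unfold_cell by blast
qed

lemma bij_betw_fold_cube: "bij_betw fold_cube (Pcell r) (box (-1) (1 :: real^'m))"
proof -
  note tri = bij_betw_tri_fold[of "r$j" for j]
  define unfold where "unfold = (\<lambda>u::real^'m. \<chi> j. inv_into {y. \<bar>y - 2 * of_int (r$j)\<bar> < 1} tri_fold (u$j))"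
  show ?thesis
  proof (rule bij_betw_byWitness[where f' = unfold])
    show "\<forall>y\<in>Pcell r. unfold (fold_cube y) = y"
      using tri by (auto simp: unfold_def fold_cube_def Pcell_def vec_eq_iff intro: bij_betw_inv_into_left[OF tri])
    show "\<forall>u\<in>box (-1) 1. fold_cube (unfold u) = u"
      using tri by (auto simp: unfold_def fold_cube_def mem_box_cart vec_eq_iff intro: bij_betw_inv_into_right[OF tri])
    show "fold_cube ` Pcell r \<subseteq> box (-1) 1"
      using tri by (fastforce simp: fold_cube_def Pcell_def mem_box_cart dest: bij_betw_apply)
    show "unfold ` box (-1) 1 \<subseteq> Pcell r"
      using tri by (fastforce simp: unfold_def Pcell_def mem_box_cart dest: bij_betw_apply[OF bij_betw_inv_into])
  qed
qed

lemma cubeQ_eq_cbox: "cubeQ = cbox (-1) (1 :: real^'m)"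
  by (auto simp: cubeQ_def mem_box_cart abs_le_iff)

lemma interior_cubeQ: "interior cubeQ = box (-1) (1 :: real^'m)"
  by (simp add: cubeQ_eq_cbox)

lemma refl_count_cell: "y \<in> Pcell r \<Longrightarrow> refl_count y = (\<Sum>j\<in>UNIV. r$j)"
  unfolding refl_count_def Pcell_def by (auto simp: refl_idx_eq intro: sum.cong)

lemma fold_cube_in_cubeQ: "y \<in> Pcell r \<Longrightarrow> fold_cube y \<in> cubeQ"
  using bij_betw_apply[OF bij_betw_fold_cube] box_subset_cbox unfolding cubeQ_eq_cbox by blast

lemma reflF_even_cell:
  "r \<in> evenS \<Longrightarrow> y \<in> Pcell r \<Longrightarrow> reflF h (y, s) = exp s *\<^sub>R h (fold_cube y)"
  by (simp add: reflF_def evenS_def refl_count_cell)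

lemma upper_hemisphere_eq_graph:
  "{v \<in> hemisphere. snd v > 0} = (\<lambda>p::real^'m. (p, sqrt (1 - (norm p)\<^sup>2))) ` ball 0 1"
proof (intro equalityI subsetI)
  fix v :: "(real^'m) \<times> real"
  assume "v \<in> {v \<in> hemisphere. snd v > 0}"
  then have "norm v = 1" and pos: "snd v > 0"
    by (auto simp: hemisphere_def)
  then have norm_v: "(norm (fst v))\<^sup>2 + (snd v)\<^sup>2 = 1"
    using norm_Pair[of "fst v" "snd v"] by simp
  moreover have "(snd v)\<^sup>2 > 0" using pos by simp
  ultimately have "(norm (fst v))\<^sup>2 < 1" by linarith
  then have "fst v \<in> ball 0 1" by (simp add: abs_square_less_1)
  moreover have "snd v = sqrt (1 - (norm (fst v))\<^sup>2)"
  proof -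
    have "1 - (norm (fst v))\<^sup>2 = (snd v)\<^sup>2" using norm_v by linarith
    then show ?thesis using pos by simp
  qed
  ultimately show "v \<in> (\<lambda>p. (p, sqrt (1 - (norm p)\<^sup>2))) ` ball 0 1"
    by (auto intro: image_eqI[where x = "fst v"] simp: prod_eq_iff)
next
  fix v :: "(real^'m) \<times> real"
  assume "v \<in> (\<lambda>p. (p, sqrt (1 - (norm p)\<^sup>2))) ` ball 0 1"
  then obtain p :: "real^'m" where p: "norm p < 1" and v: "v = (p, sqrt (1 - (norm p)\<^sup>2))"
    by auto
  have "(norm p)\<^sup>2 < 1" using p by (simp add: abs_square_less_1)
  then show "v \<in> {v \<in> hemisphere. snd v > 0}"
    by (simp add: v hemisphere_def norm_Pair)
qed

lemma homeomorphism_upper_hemisphere_interior: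
  fixes S :: "(real^'m) set" and g :: "(real^'m) \<times> real \<Rightarrow> real^'m"
  assumes hom: "homeomorphism S hemisphere h g" and v: "v \<in> hemisphere" "snd v > 0"
  shows "g v \<in> interior S"
proof -
  define graph where "graph = (\<lambda>p::real^'m. (p, sqrt (1 - (norm p)\<^sup>2)))"
  have graph_img: "graph ` ball 0 1 = {v \<in> hemisphere. snd v > 0}"
    unfolding graph_def by (rule upper_hemisphere_eq_graph[symmetric])
  have cont_g: "continuous_on hemisphere g" and g_img: "g ` hemisphere = S"
    and hg: "\<And>y. y \<in> hemisphere \<Longrightarrow> h (g y) = y"
    using hom by (auto simp: homeomorphism_def)
  have "continuous_on (ball 0 1) graph"
    unfolding graph_def by (intro continuous_intros)
  then have cont: "continuous_on (ball 0 1) (g \<circ> graph)"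
    using graph_img by (intro continuous_on_compose continuous_on_subset[OF cont_g]) auto
  have "inj_on (g \<circ> graph) (ball 0 1)"
  proof (rule inj_onI)
    fix p q assume "p \<in> ball 0 1" "q \<in> ball 0 1" "(g \<circ> graph) p = (g \<circ> graph) q"
    moreover have "graph p \<in> hemisphere" "graph q \<in> hemisphere"
      using graph_img \<open>p \<in> ball 0 1\<close> \<open>q \<in> ball 0 1\<close> by auto
    ultimately have "graph p = graph q"
      using hg by (metis comp_apply)
    then show "p = q" by (simp add: graph_def)
  qed
  then have "open ((g \<circ> graph) ` ball 0 1)"
    using invariance_of_domain[OF cont open_ball] by blast
  moreover have "(g \<circ> graph) ` ball 0 1 \<subseteq> S"
    using graph_img g_img by (auto simp flip: image_comp)
  ultimately have "(g \<circ> graph) ` ball 0 1 \<subseteq> interior S"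
    by (rule interior_maximal[rotated])
  moreover have "v \<in> graph ` ball 0 1"
    using v graph_img by blast
  then have "g v \<in> (g \<circ> graph) ` ball 0 1"
    by auto
  ultimately show ?thesis by blast
qed

lemma snd_le_norm: "snd z \<le> norm (z :: 'a::real_normed_vector \<times> real)"
  using norm_snd_le[of "snd z" "fst z"] by simp

context
  fixes h :: "real^'m \<Rightarrow> (real^'m) \<times> real" and g and r :: "int^'m"
  assumes hom: "homeomorphism cubeQ hemisphere h g" and r: "r \<in> evenS"
begin

lemma norm_reflF_even_cell: "x \<in> Pcell r \<times> UNIV \<Longrightarrow> norm (reflF h x) = exp (snd x)"
proof -
  assume x: "x \<in> Pcell r \<times> UNIV"
  then have "fold_cube (fst x) \<in> cubeQ"
    by (auto intro: fold_cube_in_cubeQ)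
  then have "norm (h (fold_cube (fst x))) = 1"
    using hom by (auto simp: homeomorphism_def hemisphere_def)
  then show ?thesis
    using x reflF_even_cell[OF r, of "fst x" h "snd x"] by auto
qed

lemma inj_on_reflF_even_cell: "inj_on (reflF h) (Pcell r \<times> UNIV)"
proof (rule inj_onI, clarify)
  fix y s y' s'
  assume y: "y \<in> Pcell r" and y': "y' \<in> Pcell r" and eq: "reflF h (y, s) = reflF h (y', s')"
  have "exp s = exp s'"
    using norm_reflF_even_cell[of "(y, s)"] norm_reflF_even_cell[of "(y', s')"] y y' eq by simp
  then have s: "s = s'" by simp
  have inj_h: "inj_on h cubeQ"
    by (rule inj_on_inverseI[where g = g]) (rule homeomorphism_apply1[OF hom])
  have "h (fold_cube y) = h (fold_cube y')"
    using eq s y y' by (simp add: reflF_even_cell[OF r])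
  then have "fold_cube y = fold_cube y'"
    using inj_h fold_cube_in_cubeQ[OF y] fold_cube_in_cubeQ[OF y'] by (auto dest: inj_onD)
  then have "y = y'"
    using bij_betw_imp_inj_on[OF bij_betw_fold_cube[of r]] y y' by (auto dest: inj_onD)
  with s show "y = y' \<and> s = s'" by simp
qed

lemma upper_half_space_subset_reflF_even_cell: "snd z > 0 \<Longrightarrow> z \<in> reflF h ` (Pcell r \<times> UNIV)"
proof -
  assume z: "snd z > 0"
  then have nz: "norm z > 0" by auto
  define v where "v = z /\<^sub>R norm z"
  have v: "v \<in> hemisphere" "snd v > 0"
    using z nz by (auto simp: v_def hemisphere_def)
  have "g v \<in> box (-1) 1"
    using homeomorphism_upper_hemisphere_interior[OF hom v] by (simp add: interior_cubeQ)
  then have "g v \<in> fold_cube ` Pcell r"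
    using bij_betw_imp_surj_on[OF bij_betw_fold_cube] by blast
  then obtain y where y: "y \<in> Pcell r" "fold_cube y = g v"
    by auto
  have "reflF h (y, ln (norm z)) = norm z *\<^sub>R h (g v)"
    using reflF_even_cell[OF r y(1)] y(2) nz by simp
  also have "\<dots> = z"
    using homeomorphism_apply2[OF hom v(1)] nz by (simp add: v_def)
  finally show ?thesis using y(1) by (auto intro: image_eqI[where x = "(y, ln (norm z))"])
qed

lemma branch_reflF_shift:
  assumes "snd y > - a"
  shows "branch (\<lambda>x. reflF h x - (0, a)) r y \<in> Pcell r \<times> UNIV"
    and "reflF h (branch (\<lambda>x. reflF h x - (0, a)) r y) = y + (0, a)"
proof -
  let ?f = "\<lambda>x. reflF h x - (0, a)"
  have inj: "inj_on ?f (Pcell r \<times> UNIV)"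
    using inj_on_reflF_even_cell by (auto simp: inj_on_def)
  have "y + (0, a) \<in> reflF h ` (Pcell r \<times> UNIV)"
    using assms by (intro upper_half_space_subset_reflF_even_cell) simp
  then have y_img: "y \<in> ?f ` (Pcell r \<times> UNIV)"
    by (auto simp: image_iff algebra_simps)
  show "branch ?f r y \<in> Pcell r \<times> UNIV"
    unfolding branch_def using the_inv_into_into[OF inj y_img] by simp
  have "?f (branch ?f r y) = y"
    unfolding branch_def using f_the_inv_into_f[OF inj y_img] .
  then show "reflF h (branch ?f r y) = y + (0, a)"
    by (simp add: algebra_simps)
qed

lemma snd_branch_ge:
  assumes a: "exp M - M < a" and y: "M \<le> snd y" "Eexp c \<le> snd y"
  shows "M \<le> snd (branch (\<lambda>x. reflF h x - (0, a)) r y) \<and> c \<le> snd (branch (\<lambda>x. reflF h x - (0, a)) r y)"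
proof -
  let ?x = "branch (\<lambda>x. reflF h x - (0, a)) r y"
  have "exp M > 0" by simp
  then have "snd y > - a" using a y by linarith
  then have "exp (snd ?x) = norm (y + (0, a))"
    using branch_reflF_shift norm_reflF_even_cell by metis
  also have "\<dots> \<ge> snd y + a"
    using snd_le_norm[of "y + (0, a)"] by simp
  finally have exp_x: "snd y + a \<le> exp (snd ?x)" .
  have "1 + M \<le> exp M" by simp
  then have "exp M < exp (snd ?x)" "exp c < exp (snd ?x)"
    using exp_x a y unfolding Eexp_def by linarith+
  then show ?thesis by simp
qed

end

lemma chain_same: "chain L k k = id"
  by (simp add: chain_def)

lemma chain_Suc_right: "l \<le> k \<Longrightarrow> chain L l (Suc k) = chain L l k \<circ> L k"
proof -
  have foldr_comp: "foldr (\<circ>) fs g = foldr (\<circ>) fs id \<circ> g" for fs :: "('a \<Rightarrow> 'a) list" and g :: "'a \<Rightarrow> 'a"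
    by (induction fs) (simp_all add: comp_assoc)
  assume "l \<le> k"
  then show ?thesis
    by (simp add: chain_def foldr_comp[of _ "L k"])
qed

lemma chain_snd_ge:
  fixes L :: "nat \<Rightarrow> 'a \<times> real \<Rightarrow> 'a \<times> real"
  assumes step: "\<And>i y c. M \<le> snd y \<Longrightarrow> Eexp c \<le> snd y \<Longrightarrow> M \<le> snd (L i y) \<and> c \<le> snd (L i y)"
    and "l \<le> k" "M \<le> snd w" "(Eexp ^^ k) t \<le> snd w"
  shows "M \<le> snd (chain L l k w) \<and> (Eexp ^^ l) t \<le> snd (chain L l k w)"
  using assms(2-)
proof (induction k arbitrary: w rule: dec_induct)
  case base
  then show ?case by (simp add: chain_same)
next
  case (step k)
  then have "M \<le> snd (L k w) \<and> (Eexp ^^ k) t \<le> snd (L k w)"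
    using assms(1) by simp
  with step show ?case by (simp add: chain_Suc_right)
qed

lemma Eexp_funpow_nonneg: "0 \<le> t \<Longrightarrow> 0 \<le> (Eexp ^^ n) t"
  by (induction n) (auto simp: Eexp_def)

theorem lemma3p2:
  fixes h :: "real^'m \<Rightarrow> (real^'m) \<times> real"
    and \<alpha> m M a t :: real and s :: "nat \<Rightarrow> int^'m" and k l :: nat
    and f :: "(real^'m) \<times> real \<Rightarrow> (real^'m) \<times> real"
    and L :: "nat \<Rightarrow> (real^'m) \<times> real \<Rightarrow> (real^'m) \<times> real"
  assumes dim: "CARD('m) \<ge> 2"
    and homeo: "\<exists>g. homeomorphism cubeQ hemisphere h g"
    and bilip: "bi_lipschitz_on cubeQ h"
    and alpha: "0 < \<alpha>" "\<alpha> < 1"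
    and mM: "m < M" "M \<ge> 1"
    and contr: "AE x in lborel. snd x \<le> m \<longrightarrow>
                  (\<forall>D. (reflF h has_derivative D) (at x) \<longrightarrow> onorm D \<le> \<alpha>)"
    and expand: "AE x in lborel. snd x \<ge> M \<longrightarrow>
                  (\<forall>D. (reflF h has_derivative D) (at x) \<longrightarrow> lower_norm D \<ge> 1 / \<alpha>)"
    and a: "a \<ge> exp M - m"
    and f_def: "f = (\<lambda>x. reflF h x - (0, a))"
    and s: "\<forall>i. s i \<in> evenS"
    and L_def: "L = (\<lambda>i. branch f (s i))"
    and k: "2 \<le> k" and l: "1 \<le> l" "l \<le> k - 1" and t: "0 \<le> t"
  shows "norm (chain L l k (L k (0, (Eexp ^^ (k + 1)) t + M)))
           \<ge> snd (chain L l k (L k (0, (Eexp ^^ (k + 1)) t + M)))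
       \<and> snd (chain L l k (L k (0, (Eexp ^^ (k + 1)) t + M))) \<ge> (Eexp ^^ l) t
       \<and> norm (chain L l k (0, (Eexp ^^ k) t + M)) \<ge> snd (chain L l k (0, (Eexp ^^ k) t + M))
       \<and> snd (chain L l k (0, (Eexp ^^ k) t + M)) \<ge> (Eexp ^^ l) t"
proof -
  obtain g where hom: "homeomorphism cubeQ hemisphere h g" using homeo by blast
  have "exp M - M < a" using mM a by linarith
  then have step: "\<And>i y c. M \<le> snd y \<Longrightarrow> Eexp c \<le> snd y \<Longrightarrow> M \<le> snd (L i y) \<and> c \<le> snd (L i y)"
    unfolding L_def f_def using snd_branch_ge[OF hom s[rule_format]] by blast
  have start: "M \<le> snd (0::real^'m, (Eexp ^^ n) t + M)" "(Eexp ^^ n) t \<le> snd (0::real^'m, (Eexp ^^ n) t + M)" for n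
    using Eexp_funpow_nonneg[OF t, of n] mM by simp_all
  have bound: "(Eexp ^^ l) t \<le> snd (chain L l n (0, (Eexp ^^ n) t + M))" if "l \<le> n" for n
    using chain_snd_ge[OF step that start] by simp
  have "l \<le> k" using l by simp
  then show ?thesis
    using bound[of k] bound[of "Suc k"] chain_Suc_right[of l k L] by (simp add: snd_le_norm)
qed

end
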